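(* For every integer $k\ge1$ and every $\tau\in T$: if $\mathfrak{h}(\tau)=k$ then $\rho(\tau)\ge\frac k2$; if $\mathfrak{r}(\tau)=k$ then $\rho(\tau)\ge k-\frac12$; if $\mathfrak{d}(\tau)=k$ then $\rho(\tau)\ge2^{k-1}-\frac12$. The same implications hold with $\tau$ replaced by $u\in U_f$ and $\mathfrak{h},\mathfrak{r},\mathfrak{d}$ replaced by $\mathfrak{h}',\mathfrak{r}',\mathfrak{d}'$.
   Context: Let $m\ge0$. $T$ is the set of $(m+1)$-colored rooted trees: the empty tree $\emptyset$ and all $\tau=[\tau_1,\dots,\tau_\kappa]_l$ with $l\in\{0,\dots,m\}$, $\kappa\ge0$, $\tau_1,\dots,\tau_\kappa\in T\setminus\{\emptyset\}$ (unordered), formed by joining the roots of the $\tau_j$ by edges to a new root of color $l$ ($\bullet_l$ when $\kappa=0$). Order: $\rho(\emptyset)=0$, $\rho([\tau_1,\dots,\tau_\kappa]_l)=\sum_j\rho(\tau_j)+1$ if $l=0$, and $=\sum_j\rho(\tau_j)+\frac12$ if $l\ge1$. $U_f$ is the set of trees $u=[\tau_1,\dots,\tau_\kappa]_f$ with $\kappa\ge0$, $\tau_j\in T\setminus\{\emptyset\}$ (a root labelled $f$), with $\rho(u)=\sum_j\rho(\tau_j)$; for $\mathfrak{g}:T\to\mathbb{N}$ put $\mathfrak{g}'(u)=\max_j\mathfrak{g}(\tau_j)$ (and $0$ for $\kappa=0$). Functions on $T$ (maxima over empty sets are $0$): height: $\mathfrak{h}(\emptyset)=0$, $\mathfrak{h}(\bullet_l)=1$,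 $\mathfrak{h}([\tau_1,\dots,\tau_\kappa]_l)=1+\max_j\mathfrak{h}(\tau_j)$; ramification: $\mathfrak{r}(\emptyset)=0$, $\mathfrak{r}(\bullet_l)=1$, $\mathfrak{r}([\tau_1]_l)=\mathfrak{r}(\tau_1)$, $\mathfrak{r}([\tau_1,\dots,\tau_\kappa]_l)=1+\max_j\mathfrak{r}(\tau_j)$ for $\kappa\ge2$; doubling index: $\mathfrak{d}(\emptyset)=0$, $\mathfrak{d}(\bullet_l)=1$, $\mathfrak{d}([\tau_1,\dots,\tau_\kappa]_l)=M$ if exactly one $i$ has $\mathfrak{d}(\tau_i)=M:=\max_j\mathfrak{d}(\tau_j)$, and $M+1$ if at least two indices $i$ have $\mathfrak{d}(\tau_i)=M$. *)

theory Defs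
  imports Main Complex_Main
begin

text \<open>Node l ts is the tree [ts]_l with root colour l.
 Children are stored as a list; all functions below are invariant under
 permutation of the children, so this models unordered trees.\<close>
datatype ctree = Empty | Node nat "ctree list"

fun wf_tree :: "nat \<Rightarrow> ctree \<Rightarrow> bool" where
  "wf_tree m Empty = True"
| "wf_tree m (Node l ts) = (l \<le> m \<and> (\<forall>t\<in>set ts. t \<noteq> Empty \<and> wf_tree m t))"

fun rho :: "ctree \<Rightarrow> real" where
  "rho Empty = 0"
| "rho (Node l ts) = sum_list (map rho ts) + (if l = 0 then 1 else 1/2)"

fun height :: "ctree \<Rightarrow> nat" where
  "height Empty = 0"
| "height (Node l ts) = 1 + Max (insert 0 (set (map height ts)))"

fun ramif :: "ctree \<Rightarrow> nat" where
  "ramif Empty = 0"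
| "ramif (Node l []) = 1"
| "ramif (Node l [t]) = ramif t"
| "ramif (Node l (t1 # t2 # ts)) = 1 + Max (insert 0 (set (map ramif (t1 # t2 # ts))))"

fun doubling :: "ctree \<Rightarrow> nat" where
  "doubling Empty = 0"
| "doubling (Node l ts) =
     (if ts = [] then 1
      else (let M = Max (insert 0 (set (map doubling ts))) in
            if length (filter (\<lambda>t. doubling t = M) ts) \<ge> 2 then M + 1 else M))"

text \<open>Trees in U_f: u = [ts]_f, represented by the list ts of its (nonempty) subtrees.\<close>
definition wf_U :: "nat \<Rightarrow> ctree list \<Rightarrow> bool" where
  "wf_U m ts = (\<forall>t\<in>set ts. t \<noteq> Empty \<and> wf_tree m t)"

definition rhoU :: "ctree list \<Rightarrow> real" where
  "rhoU ts = sum_list (map rho ts)"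

definition primeU :: "(ctree \<Rightarrow> nat) \<Rightarrow> ctree list \<Rightarrow> nat" where
  "primeU g ts = Max (insert 0 (set (map g ts)))"

end

theory Submission
  imports Defs
begin

text \<open>Every node contributes at least 1/2 to rho, and so does every nonempty subtree.
For the height, follow a tallest child. For the ramification, a branching node has, besides
a child of maximal ramification, a further nonempty child worth at least 1/2. For the
doubling index the induction invariant is 2^d \<le> 2 rho + 1: when the maximum M of the
children's indices is attained twice, those two children alone have rho \<ge> 2^M - 1.
A tree u in U_f with g'(u) = k \<ge> 1 has a child t with g(t) = k, and rho(u) \<ge> rho(t).\<close>

lemma sum_list_map_ge_member:
  fixes f :: "'a \<Rightarrow> 'b::ordered_comm_monoid_add"
  assumes "\<And>y. y \<in> set xs \<Longrightarrow> 0 \<le> f y" and "x \<in> set xs"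
  shows "f x \<le> sum_list (map f xs)"
  using assms
proof (induction xs)
  case (Cons y xs)
  have "0 \<le> sum_list (map f xs)" using Cons.prems(1) by (intro sum_list_nonneg) auto
  with Cons show ?case by (auto intro: add_increasing add_increasing2)
qed simp

lemma sum_list_map_ge_member_plus:
  fixes f :: "'a \<Rightarrow> 'b::ordered_comm_monoid_add"
  assumes nonneg: "\<And>y. y \<in> set xs \<Longrightarrow> 0 \<le> f y"
    and lower: "\<And>y. y \<in> set xs \<Longrightarrow> c \<le> f y"
    and "x \<in> set xs" and "2 \<le> length xs"
  shows "f x + c \<le> sum_list (map f xs)"
proof -
  have "remove1 x xs \<noteq> []"
    using assms(3,4) by (auto simp: length_remove1 simp flip: length_0_conv)
  then obtain y where y: "y \<in> set (remove1 x xs)" by (cases "remove1 x xs") auto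
  have rest: "\<And>z. z \<in> set (remove1 x xs) \<Longrightarrow> z \<in> set xs"
    by (meson in_mono set_remove1_subset)
  have "c \<le> sum_list (map f (remove1 x xs))"
    using lower[OF rest[OF y]] sum_list_map_ge_member[OF nonneg[OF rest] y] by (rule order.trans)
  then show ?thesis
    using sum_list_map_remove1[OF assms(3), of f] by (simp add: add_left_mono)
qed

lemma sum_list_map_filter_le:
  fixes f :: "'a \<Rightarrow> 'b::ordered_comm_monoid_add"
  assumes "\<And>y. y \<in> set xs \<Longrightarrow> 0 \<le> f y"
  shows "sum_list (map f (filter P xs)) \<le> sum_list (map f xs)"
  using assms by (induction xs) (auto simp: add_increasing add_mono)

lemma length_mult_le_sum_list_map:
  fixes f :: "'a \<Rightarrow> 'b::linordered_semidom"
  assumes "\<And>y. y \<in> set xs \<Longrightarrow> c \<le> f y"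
  shows "of_nat (length xs) * c \<le> sum_list (map f xs)"
  using assms by (induction xs) (auto simp: algebra_simps add_mono)

lemma Max_insert_zero_attained:
  fixes g :: "'a \<Rightarrow> nat"
  assumes "finite A" "A \<noteq> {}"
  shows "\<exists>x\<in>A. Max (insert 0 (g ` A)) = g x"
proof -
  obtain x where "x \<in> A" using assms(2) by blast
  have "Max (insert 0 (g ` A)) \<in> insert 0 (g ` A)" using assms(1) by (intro Max_in) auto
  moreover have "g x \<le> Max (insert 0 (g ` A))" using assms(1) \<open>x \<in> A\<close> by (intro Max_ge) auto
  ultimately show ?thesis using \<open>x \<in> A\<close> by auto
qed

lemma rho_nonneg: "0 \<le> rho t"
  by (induction t) (auto intro!: sum_list_nonneg add_nonneg_nonneg)

lemma rho_Node_ge: "sum_list (map rho ts) + 1/2 \<le> rho (Node l ts)"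
  by simp

lemma sum_list_rho_nonneg: "0 \<le> sum_list (map rho ts)"
  by (intro sum_list_nonneg) (auto simp: rho_nonneg)

lemma rho_ge_half: "t \<noteq> Empty \<Longrightarrow> 1/2 \<le> rho t"
  using rho_Node_ge sum_list_rho_nonneg by (cases t) (auto intro: order.trans[OF _ rho_Node_ge])

lemma rho_le_sum_list: "t \<in> set ts \<Longrightarrow> rho t \<le> sum_list (map rho ts)"
  by (rule sum_list_map_ge_member) (simp_all add: rho_nonneg)

lemma height_le_two_rho: "real (height t) \<le> 2 * rho t"
proof (induction t)
  case Empty
  then show ?case by simp
next
  case (Node l ts)
  show ?case
  proof (cases "ts = []")
    case True
    then show ?thesis by simp
  next
    case False
    then obtain t where t: "t \<in> set ts" "Max (insert 0 (height ` set ts)) = height t"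
      using Max_insert_zero_attained[of "set ts" height] by auto
    have "real (height (Node l ts)) = 1 + real (height t)" using t(2) by simp
    also have "\<dots> \<le> 1 + 2 * rho t" using Node t(1) by simp
    also have "\<dots> \<le> 2 * rho (Node l ts)"
      using rho_le_sum_list[OF t(1)] rho_Node_ge[of ts l] by linarith
    finally show ?thesis .
  qed
qed

lemma ramif_le_rho: "wf_tree m t \<Longrightarrow> real (ramif t) \<le> rho t + 1/2"
proof (induction t rule: ramif.induct)
  case (3 l t)
  then show ?case using rho_nonneg[of t] by auto
next
  case (4 l t1 t2 ts)
  let ?ts = "t1 # t2 # ts"
  obtain t where t: "t \<in> set ?ts" "Max (insert 0 (ramif ` set ?ts)) = ramif t"
    using Max_insert_zero_attained[of "set ?ts" ramif] by auto
  have children: "\<And>s. s \<in> set ?ts \<Longrightarrow> wf_tree m s \<and> 1/2 \<le> rho s"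
    using "4.prems" rho_ge_half by auto
  have "real (ramif (Node l ?ts)) = 1 + real (ramif t)"
    by (simp only: ramif.simps set_map t(2) of_nat_add of_nat_1)
  also have "\<dots> \<le> rho t + 1/2 + 1/2 + 1/2"
    using "4.IH"[OF t(1)] children[OF t(1)] by simp
  also have "\<dots> \<le> sum_list (map rho ?ts) + 1/2 + 1/2"
    using sum_list_map_ge_member_plus[of ?ts rho "1/2" t] t(1) children rho_nonneg by simp
  also have "\<dots> \<le> rho (Node l ?ts) + 1/2"
    using rho_Node_ge[of ?ts l] by linarith
  finally show ?case .
qed simp_all

lemma two_pow_doubling_le: "2 ^ doubling t \<le> 2 * rho t + 1"
proof (induction t)
  case Empty
  then show ?case by simp
next
  case (Node l ts)
  show ?case
  proof (cases "ts = []")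
    case True
    then show ?thesis by simp
  next
    case False
    define M where "M = Max (insert 0 (doubling ` set ts))"
    obtain t where t: "t \<in> set ts" "M = doubling t"
      using Max_insert_zero_attained[of "set ts" doubling] False unfolding M_def by auto
    define tops where "tops = filter (\<lambda>s. doubling s = M) ts"
    have node_ge: "2 * sum_list (map rho ts) + 2 \<le> 2 * rho (Node l ts) + 1"
      using rho_Node_ge[of ts l] by linarith
    show ?thesis
    proof (cases "2 \<le> length tops")
      case True
      have "(2 ^ M - 1) / 2 \<le> rho s" if "s \<in> set tops" for s
        using Node.IH that unfolding tops_def by fastforce
      then have "real (length tops) * ((2 ^ M - 1) / 2) \<le> sum_list (map rho tops)"
        by (rule length_mult_le_sum_list_map)
      moreover have "2 * ((2 ^ M - 1) / 2) \<le> real (length tops) * ((2 ^ M - 1) / 2 :: real)"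
        using True by (intro mult_right_mono) auto
      moreover have "sum_list (map rho tops) \<le> sum_list (map rho ts)"
        unfolding tops_def by (rule sum_list_map_filter_le) (rule rho_nonneg)
      ultimately have "2 ^ M - 1 \<le> sum_list (map rho ts)" by simp
      then show ?thesis
        using True False node_ge unfolding tops_def M_def by (simp add: Let_def)
    next
      case False
      have "2 ^ M \<le> 2 * sum_list (map rho ts) + 1"
        using Node.IH[OF t(1)] rho_le_sum_list[OF t(1)] t(2) by simp
      then show ?thesis
        using False \<open>ts \<noteq> []\<close> node_ge unfolding tops_def M_def by (simp add: Let_def)
    qed
  qed
qed

lemma primeU_attained:
  assumes "0 < primeU g u"
  obtains t where "t \<in> set u" "g t = primeU g u"
proof -
  have "u \<noteq> []" using assms by (auto simp: primeU_def)
  then show ?thesis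
    using that Max_insert_zero_attained[of "set u" g] by (auto simp: primeU_def)
qed

lemma rhoU_ge_of_primeU:
  assumes "wf_U m u" and "0 < primeU g u"
    and "\<And>t. wf_tree m t \<Longrightarrow> g t = primeU g u \<Longrightarrow> c \<le> rho t"
  shows "c \<le> rhoU u"
proof -
  obtain t where t: "t \<in> set u" "g t = primeU g u"
    using primeU_attained[OF assms(2)] .
  then have "c \<le> rho t" using assms(1,3) by (auto simp: wf_U_def)
  also have "\<dots> \<le> rhoU u" unfolding rhoU_def using t(1) by (rule rho_le_sum_list)
  finally show ?thesis .
qed

theorem mainTheorem6:
  fixes m k :: nat
  assumes "k \<ge> 1"
  shows "(\<forall>\<tau>. wf_tree m \<tau> \<longrightarrow>
            (height \<tau> = k \<longrightarrow> rho \<tau> \<ge> real k / 2) \<and>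
            (ramif \<tau> = k \<longrightarrow> rho \<tau> \<ge> real k - 1/2) \<and>
            (doubling \<tau> = k \<longrightarrow> rho \<tau> \<ge> 2 ^ (k - 1) - 1/2))
       \<and> (\<forall>u. wf_U m u \<longrightarrow>
            (primeU height u = k \<longrightarrow> rhoU u \<ge> real k / 2) \<and>
            (primeU ramif u = k \<longrightarrow> rhoU u \<ge> real k - 1/2) \<and>
            (primeU doubling u = k \<longrightarrow> rhoU u \<ge> 2 ^ (k - 1) - 1/2))"
proof -
  have pow: "(2::real) ^ k = 2 * 2 ^ (k - 1)"
    using assms by (simp flip: power_Suc)
  have height: "real k / 2 \<le> rho \<tau>" if "height \<tau> = k" for \<tau>
    using height_le_two_rho[of \<tau>] that by simp
  have ramif: "real k - 1/2 \<le> rho \<tau>" if "wf_tree m \<tau>" "ramif \<tau> = k" for \<tau>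
    using ramif_le_rho[OF that(1)] that(2) by simp
  have doubling: "2 ^ (k - 1) - 1/2 \<le> rho \<tau>" if "doubling \<tau> = k" for \<tau>
    using two_pow_doubling_le[of \<tau>] pow that by simp
  have pos: "0 < k" using assms by simp
  show ?thesis
    by (intro conjI allI impI; metis height ramif doubling pos rhoU_ge_of_primeU)
qed

end
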